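(* Let $X$ be a scalar random variable with unknown distribution $\pi$ and an upper bound $u_b \in \mathbb{R}$ such that $\mathbb{P}_{\pi}[X \leq u_b] = 1$. Let $x_1,\dots,x_N$ be $N$ independent samples of $X$, and let $\zeta^*_N$ be the solution of the program $\min_{\zeta \in \mathbb{R}} \zeta$ subject to $\zeta \geq x_i$ for all $i=1,\dots,N$ (i.e. $\zeta^*_N = \max_{1\le k\le N} x_k$). Then for every $\epsilon \in [0,1]$, \[ \mathbb{P}^N_{\pi}\left[\mathbb{E}_{\pi}[X] \leq \zeta^*_N(1-\epsilon) + u_b\epsilon\right] \geq 1-(1-\epsilon)^N . \]
   Context: $\mathbb{P}^N_{\pi}$ denotes the $N$-fold product probability measure governing the i.i.d. sample $(x_1,\dots,x_N)$ drawn from $\pi$. *)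

theory Defs
  imports "HOL-Probability.Probability"
begin

text \<open>Optimal value of the scenario program  min zeta  s.t. zeta >= x i for all i < N,
  namely the largest sample.\<close>
definition zeta_star :: "nat \<Rightarrow> (nat \<Rightarrow> real) \<Rightarrow> real" where
  "zeta_star N xs = Max (xs ` {..<N})"

end

theory Submission
  imports Defs
begin

(* Put s = 1 - \<epsilon> and let A be the set of values x with x s + u_b \<epsilon> < E X.
   Since t \<mapsto> t s + u_b \<epsilon> is monotone and zeta_star N xs is the largest sample, the event
   fails exactly when all N samples lie in A, which by independence has probability P(A)^N.
   Markov's inequality for the nonnegative variable u_b - X gives P(A) \<le> s. *)

lemma (in prob_space) prob_expectation_less_scaled_le:
  fixes Y :: "'a \<Rightarrow> real"
  assumes Y: "integrable M Y" and Y_nonneg: "AE x in M. 0 \<le> Y x" and "0 \<le> s"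
  shows "prob {x \<in> space M. expectation Y < s * Y x} \<le> s"
proof -
  have "expectation Y \<ge> 0"
    using Y_nonneg by (rule integral_nonneg_AE)
  then consider "expectation Y = 0" | "s = 0" | "expectation Y > 0" "s > 0"
    using \<open>0 \<le> s\<close> by fastforce
  then show ?thesis
  proof cases
    case 1
    then have "AE x in M. Y x = 0"
      using integral_nonneg_eq_0_iff_AE[OF Y Y_nonneg] by simp
    then have "AE x in M. \<not> expectation Y < s * Y x"
      by eventually_elim (simp add: 1)
    then have "prob {x \<in> space M. expectation Y < s * Y x} = 0"
      by (rule prob_eq_0_AE)
    then show ?thesis using \<open>0 \<le> s\<close> by simp
  next
    case 2
    with \<open>expectation Y \<ge> 0\<close> show ?thesis by simp
  next
    case 3
    have "prob {x \<in> space M. expectation Y < s * Y x} \<le> prob {x \<in> space M. Y x \<ge> expectation Y / s}"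
      using 3 borel_measurable_integrable[OF Y]
      by (intro finite_measure_mono) (auto simp: field_simps)
    also have "\<dots> \<le> expectation Y / (expectation Y / s)"
      using 3 by (intro integral_Markov_inequality_measure[OF Y sets.top Y_nonneg]) simp
    also have "\<dots> = s"
      using 3 by simp
    finally show ?thesis .
  qed
qed

lemma (in prob_space) prob_affine_combination_below_expectation_le:
  fixes X :: "'a \<Rightarrow> real"
  assumes X: "integrable M X" and bounded: "AE x in M. X x \<le> u"
    and "0 \<le> \<epsilon>" and "\<epsilon> \<le> 1"
  shows "prob {x \<in> space M. X x * (1 - \<epsilon>) + u * \<epsilon> < expectation X} \<le> 1 - \<epsilon>"
proof -
  have "expectation (\<lambda>x. u - X x) = u - expectation X"
    using X by (simp add: prob_space)
  then have "{x \<in> space M. X x * (1 - \<epsilon>) + u * \<epsilon> < expectation X}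
      = {x \<in> space M. expectation (\<lambda>x. u - X x) < (1 - \<epsilon>) * (u - X x)}"
    by (auto simp: algebra_simps)
  also have "prob \<dots> \<le> 1 - \<epsilon>"
    using X bounded \<open>\<epsilon> \<le> 1\<close> by (intro prob_expectation_less_scaled_le) auto
  finally show ?thesis .
qed

lemma (in prob_space) measure_PiM_PiE_power:
  assumes "finite I" and "A \<in> sets M"
  shows "measure (PiM I (\<lambda>_. M)) (PiE I (\<lambda>_. A)) = prob A ^ card I"
proof -
  have "finite_product_prob_space (\<lambda>_. M) I"
    by unfold_locales (simp_all add: \<open>finite I\<close> prob_space_axioms)
  then show ?thesis
    using assms by (simp add: finite_product_prob_space.finite_measure_PiM_emb)
qed

lemma affine_zeta_star_less_iff:
  fixes s b c :: real
  assumes "N \<ge> 1" and "0 \<le> s"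
  shows "zeta_star N xs * s + b < c \<longleftrightarrow> (\<forall>i<N. xs i * s + b < c)"
proof
  assume less: "zeta_star N xs * s + b < c"
  show "\<forall>i<N. xs i * s + b < c"
  proof (intro allI impI)
    fix i assume "i < N"
    then have "xs i \<le> zeta_star N xs"
      unfolding zeta_star_def by (intro Max_ge) auto
    then show "xs i * s + b < c"
      using less \<open>0 \<le> s\<close> mult_right_mono by fastforce
  qed
next
  assume "\<forall>i<N. xs i * s + b < c"
  moreover have "zeta_star N xs \<in> xs ` {..<N}"
    unfolding zeta_star_def using \<open>N \<ge> 1\<close> by (intro Max_in) (auto simp: lessThan_empty_iff)
  ultimately show "zeta_star N xs * s + b < c"
    by auto
qed

theorem theorem5:
  fixes \<pi> :: "real measure" and u_b :: real and N :: nat and \<epsilon> :: real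
  assumes "prob_space \<pi>"
    and "sets \<pi> = sets borel"
    and "integrable \<pi> (\<lambda>x. x)"
    and "AE x in \<pi>. x \<le> u_b"
    and "N \<ge> 1"
    and "0 \<le> \<epsilon>" and "\<epsilon> \<le> 1"
  shows "measure (PiM {..<N} (\<lambda>_. \<pi>))
           {xs \<in> space (PiM {..<N} (\<lambda>_. \<pi>)).
              (\<integral>x. x \<partial>\<pi>) \<le> zeta_star N xs * (1 - \<epsilon>) + u_b * \<epsilon>}
         \<ge> 1 - (1 - \<epsilon>) ^ N"
proof -
  interpret prob_space \<pi> by fact
  define P where "P = PiM {..<N} (\<lambda>_. \<pi>)"
  define m where "m = (\<integral>x. x \<partial>\<pi>)"
  define A where "A = {x. x * (1 - \<epsilon>) + u_b * \<epsilon> < m}"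
  have space_\<pi>: "space \<pi> = UNIV"
    using sets_eq_imp_space_eq[OF assms(2)] by simp
  have A_sets: "A \<in> sets \<pi>"
    unfolding A_def assms(2) by measurable
  have prob_A: "prob A \<le> 1 - \<epsilon>"
    using prob_affine_combination_below_expectation_le[OF assms(3,4,6,7)]
    by (simp add: A_def m_def space_\<pi>)
  have "{xs \<in> space P. \<not> m \<le> zeta_star N xs * (1 - \<epsilon>) + u_b * \<epsilon>} = PiE {..<N} (\<lambda>_. A)"
    using affine_zeta_star_less_iff[OF assms(5), of "1 - \<epsilon>"] assms(7)
    by (auto simp: P_def space_PiM space_\<pi> A_def not_le)
  then have "{xs \<in> space P. m \<le> zeta_star N xs * (1 - \<epsilon>) + u_b * \<epsilon>} = space P - PiE {..<N} (\<lambda>_. A)"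
    by blast
  moreover have "PiE {..<N} (\<lambda>_. A) \<in> sets P"
    unfolding P_def using A_sets by (intro sets_PiM_I_finite) auto
  then have "measure P (space P - PiE {..<N} (\<lambda>_. A)) = 1 - measure P (PiE {..<N} (\<lambda>_. A))"
    unfolding P_def by (intro prob_space.prob_compl prob_space_PiM assms(1))
  also have "measure P (PiE {..<N} (\<lambda>_. A)) = prob A ^ N"
    unfolding P_def using measure_PiM_PiE_power[of "{..<N}", OF _ A_sets] by simp
  moreover have "prob A ^ N \<le> (1 - \<epsilon>) ^ N"
    using prob_A by (intro power_mono) auto
  ultimately show ?thesis
    by (simp add: P_def m_def)
qed

end
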